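(* Let $\gamma_1,\dots,\gamma_n:[a,b]\to V$ be continuous paths of bounded variation whose signatures $S(\gamma_1)_{a,b},\dots,S(\gamma_n)_{a,b}$ are pairwise distinct. If $\phi:\mathbb{N}\cup\{0\}\to(0,\infty)$ satisfies $\sum_kC^k\phi(k)(k!)^{-2}<\infty$ for every $C>0$, then the matrix $K=\left(\langle S(\gamma_i)_{a,b},S(\gamma_j)_{a,b}\rangle_\phi\right)_{i,j=1,\dots,n}$ is positive definite.
   Context: $V$ is a finite-dimensional real inner product space, $\langle\cdot,\cdot\rangle_k$ the induced Hilbert–Schmidt inner product on $V^{\otimes k}$. Signature: $S(\gamma)_{a,b}=\sum_kS(\gamma)^k_{a,b}$, $S(\gamma)^0=1$, $S(\gamma)^k_{a,b}=\int_{a<u_1<\dots<u_k<b}d\gamma_{u_1}\otimes\cdots\otimes d\gamma_{u_k}$. $\langle x,y\rangle_\phi=\sum_k\phi(k)\langle x_k,y_k\rangle_k$. *)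

theory Defs
  imports "HOL-Analysis.Analysis"
begin

definition bounded_variation_on :: "(real \<Rightarrow> 'v::real_normed_vector) \<Rightarrow> real \<Rightarrow> real \<Rightarrow> bool" where
  "bounded_variation_on \<gamma> a b \<longleftrightarrow>
     (\<exists>M. \<forall>n (t::nat \<Rightarrow> real).
        t 0 = a \<and> t n = b \<and> (\<forall>j<n. t j \<le> t (Suc j)) \<longrightarrow>
        (\<Sum>j<n. norm (\<gamma> (t (Suc j)) - \<gamma> (t j))) \<le> M)"

definition has_RS_integral :: "(real \<Rightarrow> real) \<Rightarrow> (real \<Rightarrow> real) \<Rightarrow> real \<Rightarrow> real \<Rightarrow> real \<Rightarrow> bool" where
  "has_RS_integral f g a b I \<longleftrightarrow>
     (\<forall>\<epsilon>>0. \<exists>\<delta>>0. \<forall>n (t::nat \<Rightarrow> real) (s::nat \<Rightarrow> real).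
        t 0 = a \<and> t n = b \<and> (\<forall>j<n. t j < t (Suc j)) \<and>
        (\<forall>j<n. t j \<le> s j \<and> s j \<le> t (Suc j)) \<and>
        (\<forall>j<n. t (Suc j) - t j < \<delta>) \<longrightarrow>
        \<bar>(\<Sum>j<n. f (s j) * (g (t (Suc j)) - g (t j))) - I\<bar> < \<epsilon>)"

definition RS_integral :: "(real \<Rightarrow> real) \<Rightarrow> (real \<Rightarrow> real) \<Rightarrow> real \<Rightarrow> real \<Rightarrow> real" where
  "RS_integral f g a b = (THE I. has_RS_integral f g a b I)"

text \<open>Tensors in V^{\<otimes>k} are represented by their coordinates with respect to the
  orthonormal basis {e_1 \<otimes> ... \<otimes> e_k | e_i \<in> Basis}, i.e. as functions on words
  (lists) over Basis of length k. The iterated integral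
  int_{a<u_1<...<u_k<t} d\<gamma>^{e_1}_{u_1} ... d\<gamma>^{e_k}_{u_k} (with \<gamma>^e = \<gamma> \<bullet> e)
  is computed recursively; sig_rev takes the word in reversed order.\<close>

fun sig_rev :: "(real \<Rightarrow> 'v::euclidean_space) \<Rightarrow> real \<Rightarrow> 'v list \<Rightarrow> real \<Rightarrow> real" where
  "sig_rev \<gamma> a [] t = 1"
| "sig_rev \<gamma> a (e # w) t = RS_integral (\<lambda>u. sig_rev \<gamma> a w u) (\<lambda>u. \<gamma> u \<bullet> e) a t"

text \<open>The signature S(\<gamma>)_{a,b} as an element of the tensor algebra: coefficient of
  the basis tensor e_1 \<otimes> ... \<otimes> e_k for the word [e_1,...,e_k] over Basis
  (0 on words not over Basis). Its level-k part consists of the words of length k;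
  the empty word gives S^0 = 1.\<close>

definition signature :: "(real \<Rightarrow> 'v::euclidean_space) \<Rightarrow> real \<Rightarrow> real \<Rightarrow> 'v list \<Rightarrow> real" where
  "signature \<gamma> a b w = (if set w \<subseteq> Basis then sig_rev \<gamma> a (rev w) b else 0)"

definition HS_inner :: "nat \<Rightarrow> ('v::euclidean_space list \<Rightarrow> real) \<Rightarrow> ('v list \<Rightarrow> real) \<Rightarrow> real" where
  "HS_inner k x y = (\<Sum>w\<in>{w. length w = k \<and> set w \<subseteq> (Basis::'v set)}. x w * y w)"

definition phi_inner :: "(nat \<Rightarrow> real) \<Rightarrow> ('v::euclidean_space list \<Rightarrow> real) \<Rightarrow> ('v list \<Rightarrow> real) \<Rightarrow> real" where
  "phi_inner \<phi> x y = (\<Sum>k. \<phi> k * HS_inner k x y)"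

end

theory Submission
  imports Defs
begin

text \<open>Each coordinate of a path of bounded variation is, by the Jordan decomposition, a difference
  of continuous monotone functions, so the Riemann--Stieltjes integrals defining the signature
  exist and can be computed as Lebesgue--Stieltjes integrals. Integration by parts then gives the
  shuffle identity \<open>S(u) S(v) = \<Sum>\<^sub>z S(z)\<close>, \<open>z\<close> ranging over the shuffles of the words
  \<open>u\<close> and \<open>v\<close>; hence the signatures of the paths are distinct characters of the shuffle algebra
  and, by Dedekind's argument, linearly independent. The coefficients of level \<open>k\<close> are bounded
  by \<open>\<Lambda>\<^sup>k/k!\<close>, \<open>\<Lambda>\<close> a total variation, so all series converge under the growth condition
  on \<open>\<phi>\<close>, and \<open>\<Sum>\<^sub>i\<^sub>j c\<^sub>i c\<^sub>j \<langle>S\<^sub>i, S\<^sub>j\<rangle>\<^sub>\<phi>\<close> is the series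
  \<open>\<Sum>\<^sub>k \<phi>(k) \<parallel>\<Sum>\<^sub>i c\<^sub>i S\<^sub>i\<^sup>k\<parallel>\<^sup>2\<close>, which is positive
  unless \<open>\<Sum>\<^sub>i c\<^sub>i S\<^sub>i = 0\<close>.\<close>

section \<open>Variation of real functions\<close>

definition is_partition :: "real \<Rightarrow> real \<Rightarrow> nat \<Rightarrow> (nat \<Rightarrow> real) \<Rightarrow> bool" where
  "is_partition c d n t \<longleftrightarrow> t 0 = c \<and> t n = d \<and> (\<forall>j<n. t j \<le> t (Suc j))"

definition variation_sum :: "(real \<Rightarrow> real) \<Rightarrow> nat \<Rightarrow> (nat \<Rightarrow> real) \<Rightarrow> real" where
  "variation_sum g n t = (\<Sum>j<n. \<bar>g (t (Suc j)) - g (t j)\<bar>)"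

text \<open>Meaningful only for functions of bounded variation: for unbounded variation sums \<open>Sup\<close>
  has no specified value.\<close>

definition variation :: "(real \<Rightarrow> real) \<Rightarrow> real \<Rightarrow> real \<Rightarrow> real" where
  "variation g c d = Sup {variation_sum g n t | n t. is_partition c d n t}"

lemma bounded_variation_on_real_iff:
  "bounded_variation_on g a b \<longleftrightarrow> (\<exists>M. \<forall>n t. is_partition a b n t \<longrightarrow> variation_sum g n t \<le> M)"
  by (simp add: bounded_variation_on_def is_partition_def variation_sum_def)

lemma is_partition_mono:
  assumes "is_partition c d n t" "i \<le> j" "j \<le> n"
  shows "t i \<le> t j"
proof (rule lift_Suc_mono_le_ivl[where N = "{..<n}"])
  show "\<And>k. k \<in> {..<n} \<Longrightarrow> t k \<le> t (Suc k)" using assms(1) by (simp add: is_partition_def)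
qed (use assms in auto)

lemma is_partition_bounds:
  assumes "is_partition c d n t" "j \<le> n"
  shows "c \<le> t j" "t j \<le> d"
  using is_partition_mono[OF assms(1), of 0 j] is_partition_mono[OF assms(1), of j n] assms
  by (auto simp: is_partition_def)

lemma is_partition_le: "is_partition c d n t \<Longrightarrow> c \<le> d"
  using is_partition_bounds[of c d n t n] by simp

lemma is_partition_single: "c \<le> d \<Longrightarrow> is_partition c d 1 (\<lambda>j. if j = 0 then c else d)"
  by (auto simp: is_partition_def)

lemma variation_sum_single [simp]:
  "variation_sum g (Suc 0) (\<lambda>j. if j = 0 then c else d) = \<bar>g d - g c\<bar>"
  by (simp add: variation_sum_def)

definition partition_append :: "nat \<Rightarrow> (nat \<Rightarrow> real) \<Rightarrow> (nat \<Rightarrow> real) \<Rightarrow> nat \<Rightarrow> real" where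
  "partition_append n1 t1 t2 j = (if j \<le> n1 then t1 j else t2 (j - n1))"

lemma is_partition_append:
  assumes "is_partition c d n1 t1" "is_partition d e n2 t2"
  shows "is_partition c e (n1 + n2) (partition_append n1 t1 t2)"
  unfolding is_partition_def
proof (intro conjI allI impI)
  show "partition_append n1 t1 t2 0 = c" "partition_append n1 t1 t2 (n1 + n2) = e"
    using assms by (auto simp: partition_append_def is_partition_def)
  fix j assume j: "j < n1 + n2"
  show "partition_append n1 t1 t2 j \<le> partition_append n1 t1 t2 (Suc j)"
  proof (cases "j < n1")
    case True
    then show ?thesis using assms(1) by (simp add: partition_append_def is_partition_def)
  next
    case False
    then obtain k where k: "j = n1 + k" "k < n2" using j by (metis le_Suc_ex not_less nat_add_left_cancel_less)
    then have "t2 k \<le> t2 (Suc k)" using assms(2) by (simp add: is_partition_def)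
    moreover have "t1 n1 = t2 0" using assms by (simp add: is_partition_def)
    ultimately show ?thesis using k by (auto simp: partition_append_def Suc_diff_le)
  qed
qed

lemma variation_sum_append:
  assumes "is_partition c d n1 t1" "is_partition d e n2 t2"
  shows "variation_sum g (n1 + n2) (partition_append n1 t1 t2) = variation_sum g n1 t1 + variation_sum g n2 t2"
proof -
  let ?t = "partition_append n1 t1 t2"
  have split: "(\<Sum>j<n1 + m. f j) = (\<Sum>j<n1. f j) + (\<Sum>j<m. f (n1 + j))" for f :: "nat \<Rightarrow> real" and m
    by (induction m) auto
  have "variation_sum g (n1 + n2) ?t =
      (\<Sum>j<n1. \<bar>g (?t (Suc j)) - g (?t j)\<bar>) + (\<Sum>j<n2. \<bar>g (?t (Suc (n1 + j))) - g (?t (n1 + j))\<bar>)"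
    unfolding variation_sum_def split ..
  also have "\<dots> = variation_sum g n1 t1 + variation_sum g n2 t2"
    using assms unfolding variation_sum_def partition_append_def is_partition_def
    by (intro arg_cong2[where f = "(+)"] sum.cong) auto
  finally show ?thesis .
qed

lemma variation_sum_le_min_max:
  assumes "\<forall>j<n. t j \<le> t (Suc j)"
  shows "variation_sum g n t \<le> variation_sum g n (\<lambda>j. min (t j) x) + variation_sum g n (\<lambda>j. max (t j) x)"
  unfolding variation_sum_def sum.distrib[symmetric]
proof (intro sum_mono)
  fix j assume "j \<in> {..<n}"
  with assms have "t j \<le> t (Suc j)" by simp
  then consider "t (Suc j) \<le> x" | "t j \<le> x" "x < t (Suc j)" | "x < t j"
    by linarith
  then show "\<bar>g (t (Suc j)) - g (t j)\<bar> \<le> \<bar>g (min (t (Suc j)) x) - g (min (t j) x)\<bar> + \<bar>g (max (t (Suc j)) x) - g (max (t j) x)\<bar>"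
    by cases (auto simp: min_def max_def)
qed

lemma is_partition_min:
  "is_partition c e n t \<Longrightarrow> c \<le> x \<Longrightarrow> x \<le> e \<Longrightarrow> is_partition c x n (\<lambda>j. min (t j) x)"
  by (auto simp: is_partition_def intro: min.mono)

lemma is_partition_max:
  "is_partition c e n t \<Longrightarrow> c \<le> x \<Longrightarrow> x \<le> e \<Longrightarrow> is_partition x e n (\<lambda>j. max (t j) x)"
  by (auto simp: is_partition_def intro: max.mono)

text \<open>A partition taking only the two values \<open>c\<close> and \<open>x\<close> jumps exactly once, so its
  variation sum telescopes.\<close>

lemma variation_sum_two_valued:
  assumes p: "is_partition c x n t" and vals: "\<And>j. j \<le> n \<Longrightarrow> t j = c \<or> t j = x"
  shows "variation_sum g n t = \<bar>g x - g c\<bar>"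
proof -
  define \<sigma> where "\<sigma> = sgn (g x - g c)"
  have "c \<le> x" using is_partition_le[OF p] .
  have "\<bar>g (t (Suc j)) - g (t j)\<bar> = \<sigma> * (g (t (Suc j)) - g (t j))" if "j < n" for j
  proof -
    have "t j \<le> t (Suc j)" using p that by (simp add: is_partition_def)
    then have "t j = t (Suc j) \<or> (t j = c \<and> t (Suc j) = x)"
      using vals[of j] vals[of "Suc j"] that \<open>c \<le> x\<close> by auto
    then show ?thesis by (auto simp: \<sigma>_def sgn_if)
  qed
  then have "variation_sum g n t = \<sigma> * (\<Sum>j<n. g (t (Suc j)) - g (t j))"
    by (simp add: variation_sum_def sum_distrib_left)
  also have "\<dots> = \<bar>g x - g c\<bar>"
    using p sum_lessThan_telescope[of "\<lambda>j. g (t j)" n] by (simp add: is_partition_def \<sigma>_def sgn_if)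
  finally show ?thesis .
qed

lemma variation_sums_bdd_above:
  assumes bv: "bounded_variation_on g a b" and "a \<le> c" "d \<le> b"
  shows "bdd_above {variation_sum g n t | n t. is_partition c d n t}"
proof -
  obtain M where M: "\<And>n t. is_partition a b n t \<Longrightarrow> variation_sum g n t \<le> M"
    using bv by (auto simp: bounded_variation_on_real_iff)
  have "variation_sum g n t \<le> M" if p: "is_partition c d n t" for n t
  proof -
    let ?l = "\<lambda>j::nat. if j = 0 then a else c" and ?r = "\<lambda>j::nat. if j = 0 then d else b"
    have l: "is_partition a c 1 ?l" and r: "is_partition d b 1 ?r"
      using assms by (simp_all add: is_partition_def)
    have lp: "is_partition a d (1 + n) (partition_append 1 ?l t)" by (rule is_partition_append[OF l p])
    have "variation_sum g ((1 + n) + 1) (partition_append (1 + n) (partition_append 1 ?l t) ?r) \<le> M"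
      by (rule M[OF is_partition_append[OF lp r]])
    then show ?thesis
      using variation_sum_append[OF lp r, of g] variation_sum_append[OF l p, of g] by simp
  qed
  then show ?thesis by (auto simp: bdd_above_def)
qed

lemma variation_sum_le_variation:
  "bounded_variation_on g a b \<Longrightarrow> a \<le> c \<Longrightarrow> d \<le> b \<Longrightarrow> is_partition c d n t \<Longrightarrow>
    variation_sum g n t \<le> variation g c d"
  unfolding variation_def by (rule cSup_upper) (auto intro: variation_sums_bdd_above)

lemma variation_le:
  "c \<le> d \<Longrightarrow> (\<And>n t. is_partition c d n t \<Longrightarrow> variation_sum g n t \<le> B) \<Longrightarrow> variation g c d \<le> B"
  unfolding variation_def by (rule cSup_least) (use is_partition_single in blast)+

lemma variation_approx:
  assumes "c \<le> d" "e > 0"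
  obtains n t where "is_partition c d n t" "variation g c d - e < variation_sum g n t"
proof -
  have "variation g c d - e < Sup {variation_sum g n t | n t. is_partition c d n t}"
    using assms(2) by (simp add: variation_def)
  from less_cSupD[OF _ this] is_partition_single[OF assms(1)] that show thesis by blast
qed

lemma abs_diff_le_variation:
  "bounded_variation_on g a b \<Longrightarrow> a \<le> c \<Longrightarrow> c \<le> d \<Longrightarrow> d \<le> b \<Longrightarrow> \<bar>g d - g c\<bar> \<le> variation g c d"
  using variation_sum_le_variation[OF _ _ _ is_partition_single[of c d], of g a b] by simp

lemma variation_nonneg:
  "bounded_variation_on g a b \<Longrightarrow> a \<le> c \<Longrightarrow> c \<le> d \<Longrightarrow> d \<le> b \<Longrightarrow> 0 \<le> variation g c d"
  using abs_diff_le_variation[of g a b c d] by linarith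

lemma variation_self [simp]: "variation g c c = 0"
proof -
  have "variation_sum g n t = 0" if "is_partition c c n t" for n t
    using variation_sum_two_valued[OF that] is_partition_bounds[OF that] by force
  moreover have "variation_sum g 1 (\<lambda>_. c) = 0" by (simp add: variation_sum_def)
  moreover have "is_partition c c 1 (\<lambda>_. c)" by (simp add: is_partition_def)
  ultimately have "{variation_sum g n t | n t. is_partition c c n t} = {0}" by fastforce
  then show ?thesis by (simp add: variation_def)
qed

lemma variation_add:
  assumes bv: "bounded_variation_on g a b" and "a \<le> c" "c \<le> d" "d \<le> e" "e \<le> b"
  shows "variation g c e = variation g c d + variation g d e"
proof (rule antisym)
  show "variation g c e \<le> variation g c d + variation g d e"
  proof (rule variation_le)
    fix n t assume p: "is_partition c e n t"
    have "variation_sum g n t \<le> variation_sum g n (\<lambda>j. min (t j) d) + variation_sum g n (\<lambda>j. max (t j) d)"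
      using p by (intro variation_sum_le_min_max) (simp add: is_partition_def)
    also have "\<dots> \<le> variation g c d + variation g d e"
      using assms is_partition_min[OF p, of d] is_partition_max[OF p, of d]
      by (intro add_mono variation_sum_le_variation[OF bv]) auto
    finally show "variation_sum g n t \<le> variation g c d + variation g d e" .
  qed (use assms in auto)
next
  have sum_le: "variation_sum g n1 t1 + variation_sum g n2 t2 \<le> variation g c e"
    if "is_partition c d n1 t1" "is_partition d e n2 t2" for n1 t1 n2 t2
    using variation_sum_append[OF that, of g] variation_sum_le_variation[OF bv _ _ is_partition_append[OF that]] assms
    by simp
  have "variation g c d \<le> variation g c e - variation g d e"
  proof (rule variation_le)
    fix n1 t1 assume p1: "is_partition c d n1 t1"
    have "variation g d e \<le> variation g c e - variation_sum g n1 t1"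
      using sum_le[OF p1] assms(4) by (intro variation_le) (auto simp: algebra_simps)
    then show "variation_sum g n1 t1 \<le> variation g c e - variation g d e" by linarith
  qed (use assms in auto)
  then show "variation g c d + variation g d e \<le> variation g c e" by linarith
qed

lemma variation_add_abs_le:
  assumes "bounded_variation_on g a b" "a \<le> x" "x \<le> y" "y \<le> b"
  shows "variation g a x + \<bar>g y - g x\<bar> \<le> variation g a y"
  using variation_add[OF assms(1) order_refl assms(2,3,4)] abs_diff_le_variation[OF assms(1) _ assms(3,4)] assms(2)
  by linarith

lemma partition_gap_right:
  assumes p: "is_partition c e n t" and "c < e" "r > 0"
  obtains x where "c < x" "x \<le> e" "x < c + r" "\<And>j. j \<le> n \<Longrightarrow> t j = c \<or> x \<le> t j"
proof -
  define A where "A = {t j | j. j \<le> n \<and> c < t j}"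
  have A: "finite A" "e \<in> A" "\<And>s. s \<in> A \<Longrightarrow> c < s"
    using p assms(2) by (auto simp: A_def is_partition_def)
  define x where "x = min (Min A) (c + r/2)"
  have "c < Min A" using A by (subst Min_gr_iff) auto
  moreover have "Min A \<le> e" using A by simp
  moreover have "t j = c \<or> x \<le> t j" if "j \<le> n" for j
  proof (cases "t j = c")
    case False
    then have "t j \<in> A" using is_partition_bounds[OF p that] that by (auto simp: A_def)
    from Min_le[OF A(1) this] show ?thesis by (simp add: x_def min_le_iff_disj)
  qed simp
  ultimately show thesis using \<open>r > 0\<close> by (intro that[of x]) (auto simp: x_def)
qed

lemma partition_gap_left:
  assumes p: "is_partition a c n t" and "a < c" "r > 0"
  obtains x where "a \<le> x" "x < c" "c - r < x" "\<And>j. j \<le> n \<Longrightarrow> t j = c \<or> t j \<le> x"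
proof -
  define A where "A = {t j | j. j \<le> n \<and> t j < c}"
  have A: "finite A" "a \<in> A" "\<And>s. s \<in> A \<Longrightarrow> s < c"
    using p assms(2) by (auto simp: A_def is_partition_def)
  define x where "x = max (Max A) (c - r/2)"
  have "Max A < c" using A by (subst Max_less_iff) auto
  moreover have "a \<le> Max A" using A by simp
  moreover have "t j = c \<or> t j \<le> x" if "j \<le> n" for j
  proof (cases "t j = c")
    case False
    then have "t j \<in> A" using is_partition_bounds[OF p that] that by (auto simp: A_def)
    from Max_ge[OF A(1) this] show ?thesis by (simp add: x_def le_max_iff_disj)
  qed simp
  ultimately show thesis using \<open>r > 0\<close> by (intro that[of x]) (auto simp: x_def)
qed

lemma variation_right_small:
  assumes bv: "bounded_variation_on g a b" and cont: "continuous_on {a..b} g"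
    and c: "a \<le> c" "c \<le> b" and e: "e > 0"
  obtains d where "d > 0" "\<And>y. c \<le> y \<Longrightarrow> y \<le> b \<Longrightarrow> y < c + d \<Longrightarrow> variation g c y < e"
proof (cases "c = b")
  case True
  then show thesis using e by (intro that[of 1]) auto
next
  case False
  obtain n t where p: "is_partition c b n t" and vs: "variation g c b - e/2 < variation_sum g n t"
    using variation_approx[of c b "e/2" g] c e by auto
  obtain r where r: "r > 0" "\<And>y. y \<in> {a..b} \<Longrightarrow> \<bar>y - c\<bar> < r \<Longrightarrow> \<bar>g y - g c\<bar> < e/2"
    using cont c e unfolding continuous_on_iff dist_real_def by (metis atLeastAtMost_iff half_gt_zero)
  obtain x where x: "c < x" "x \<le> b" "x < c + r" and gap: "\<And>j. j \<le> n \<Longrightarrow> t j = c \<or> x \<le> t j"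
    using partition_gap_right[OF p _ r(1)] False c by auto
  have gx: "\<bar>g x - g c\<bar> < e/2" using x c by (intro r(2)) auto
  have "min (t j) x = c \<or> min (t j) x = x" if "j \<le> n" for j
    using gap[OF that] x by auto
  then have "variation_sum g n (\<lambda>j. min (t j) x) = \<bar>g x - g c\<bar>"
    using x c by (intro variation_sum_two_valued[OF is_partition_min[OF p]]) auto
  then have "variation_sum g n t \<le> \<bar>g x - g c\<bar> + variation g x b"
    using variation_sum_le_min_max[of n t g x] p is_partition_max[OF p, of x] x c
      variation_sum_le_variation[OF bv, of x b n "\<lambda>j. max (t j) x"]
    by (simp add: is_partition_def)
  then have small: "variation g c x < e"
    using vs x gx variation_add[OF bv c(1) _ x(2) order_refl] by linarith
  show thesis
  proof (rule that[of "x - c"])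
    fix y assume y: "c \<le> y" "y \<le> b" "y < c + (x - c)"
    then show "variation g c y < e"
      using small variation_add[OF bv c(1) y(1), of x] variation_nonneg[OF bv, of y x] c x by auto
  qed (use x in auto)
qed

lemma variation_left_small:
  assumes bv: "bounded_variation_on g a b" and cont: "continuous_on {a..b} g"
    and c: "a \<le> c" "c \<le> b" and e: "e > 0"
  obtains d where "d > 0" "\<And>y. a \<le> y \<Longrightarrow> y \<le> c \<Longrightarrow> c - d < y \<Longrightarrow> variation g y c < e"
proof (cases "c = a")
  case True
  then show thesis using e by (intro that[of 1]) auto
next
  case False
  obtain n t where p: "is_partition a c n t" and vs: "variation g a c - e/2 < variation_sum g n t"
    using variation_approx[of a c "e/2" g] c e by auto
  obtain r where r: "r > 0" "\<And>y. y \<in> {a..b} \<Longrightarrow> \<bar>y - c\<bar> < r \<Longrightarrow> \<bar>g y - g c\<bar> < e/2"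
    using cont c e unfolding continuous_on_iff dist_real_def by (metis atLeastAtMost_iff half_gt_zero)
  obtain x where x: "a \<le> x" "x < c" "c - r < x" and gap: "\<And>j. j \<le> n \<Longrightarrow> t j = c \<or> t j \<le> x"
    using partition_gap_left[OF p _ r(1)] False c by auto
  have gx: "\<bar>g c - g x\<bar> < e/2" using x c r(2)[of x] by (auto simp: abs_minus_commute)
  have "max (t j) x = x \<or> max (t j) x = c" if "j \<le> n" for j
    using gap[OF that] x by auto
  then have "variation_sum g n (\<lambda>j. max (t j) x) = \<bar>g c - g x\<bar>"
    using x c by (intro variation_sum_two_valued[OF is_partition_max[OF p]]) auto
  then have "variation_sum g n t \<le> variation g a x + \<bar>g c - g x\<bar>"
    using variation_sum_le_min_max[of n t g x] p is_partition_min[OF p, of x] x c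
      variation_sum_le_variation[OF bv, of a x n "\<lambda>j. min (t j) x"]
    by (simp add: is_partition_def)
  then have small: "variation g x c < e"
    using vs x gx variation_add[OF bv order_refl x(1) _ c(2)] by linarith
  show thesis
  proof (rule that[of "c - x"])
    fix y assume y: "a \<le> y" "y \<le> c" "c - (c - x) < y"
    then show "variation g y c < e"
      using small variation_add[OF bv x(1) _ y(2) c(2)] variation_nonneg[OF bv x(1), of y] c x by auto
  qed (use x in auto)
qed

lemma continuous_on_variation:
  assumes bv: "bounded_variation_on g a b" and cont: "continuous_on {a..b} g"
  shows "continuous_on {a..b} (variation g a)"
  unfolding continuous_on_iff dist_real_def
proof (intro ballI allI impI)
  fix x e :: real assume x: "x \<in> {a..b}" and e: "e > 0"
  obtain d1 where d1: "d1 > 0" "\<And>y. x \<le> y \<Longrightarrow> y \<le> b \<Longrightarrow> y < x + d1 \<Longrightarrow> variation g x y < e"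
    using variation_right_small[OF bv cont _ _ e, of x] x by auto
  obtain d2 where d2: "d2 > 0" "\<And>y. a \<le> y \<Longrightarrow> y \<le> x \<Longrightarrow> x - d2 < y \<Longrightarrow> variation g y x < e"
    using variation_left_small[OF bv cont _ _ e, of x] x by auto
  have "\<bar>variation g a y - variation g a x\<bar> < e" if y: "y \<in> {a..b}" "\<bar>y - x\<bar> < min d1 d2" for y
  proof (cases "x \<le> y")
    case True
    then show ?thesis
      using variation_add[OF bv order_refl, of x y] variation_nonneg[OF bv, of x y] d1(2)[OF True] x y
      by auto
  next
    case False
    then show ?thesis
      using variation_add[OF bv order_refl, of y x] variation_nonneg[OF bv, of y x] d2(2)[of y] x y
      by auto
  qed
  then show "\<exists>d>0. \<forall>y\<in>{a..b}. \<bar>y - x\<bar> < d \<longrightarrow> \<bar>variation g a y - variation g a x\<bar> < e"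
    using d1(1) d2(1) by (intro exI[of _ "min d1 d2"]) auto
qed

section \<open>Riemann--Stieltjes sums\<close>

definition fine_tagged_partition ::
    "real \<Rightarrow> real \<Rightarrow> nat \<Rightarrow> (nat \<Rightarrow> real) \<Rightarrow> (nat \<Rightarrow> real) \<Rightarrow> real \<Rightarrow> bool" where
  "fine_tagged_partition a b n t s \<delta> \<longleftrightarrow> t 0 = a \<and> t n = b \<and> (\<forall>j<n. t j < t (Suc j)) \<and>
     (\<forall>j<n. t j \<le> s j \<and> s j \<le> t (Suc j)) \<and> (\<forall>j<n. t (Suc j) - t j < \<delta>)"

definition RS_sum :: "(real \<Rightarrow> real) \<Rightarrow> (real \<Rightarrow> real) \<Rightarrow> nat \<Rightarrow> (nat \<Rightarrow> real) \<Rightarrow> (nat \<Rightarrow> real) \<Rightarrow> real" where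
  "RS_sum f g n t s = (\<Sum>j<n. f (s j) * (g (t (Suc j)) - g (t j)))"

lemma has_RS_integral_iff:
  "has_RS_integral f g a b I \<longleftrightarrow>
     (\<forall>e>0. \<exists>\<delta>>0. \<forall>n t s. fine_tagged_partition a b n t s \<delta> \<longrightarrow> \<bar>RS_sum f g n t s - I\<bar> < e)"
  unfolding has_RS_integral_def fine_tagged_partition_def RS_sum_def by blast

lemma has_RS_integralE:
  assumes "has_RS_integral f g a b I" "e > 0"
  obtains \<delta> where "\<delta> > 0" "\<And>n t s. fine_tagged_partition a b n t s \<delta> \<Longrightarrow> \<bar>RS_sum f g n t s - I\<bar> < e"
  using assms unfolding has_RS_integral_iff by blast

lemma fine_tagged_partition_mono:
  "fine_tagged_partition a b n t s \<delta> \<Longrightarrow> \<delta> \<le> \<delta>' \<Longrightarrow> fine_tagged_partition a b n t s \<delta>'"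
  unfolding fine_tagged_partition_def by force

lemma fine_tagged_partition_is_partition:
  "fine_tagged_partition a b n t s \<delta> \<Longrightarrow> is_partition a b n t"
  unfolding fine_tagged_partition_def is_partition_def by (auto simp: less_imp_le)

lemma fine_tagged_partition_bounds:
  assumes "fine_tagged_partition a b n t s \<delta>" "j < n"
  shows "a \<le> t j" "t (Suc j) \<le> b" "t j \<le> s j" "s j \<le> t (Suc j)" "t j < t (Suc j)" "t (Suc j) - t j < \<delta>"
  using is_partition_bounds[OF fine_tagged_partition_is_partition[OF assms(1)], of j]
    is_partition_bounds[OF fine_tagged_partition_is_partition[OF assms(1)], of "Suc j"] assms
  unfolding fine_tagged_partition_def by auto

lemma fine_tagged_partition_degenerate: "fine_tagged_partition a a n t s \<delta> \<Longrightarrow> n = 0"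
  using fine_tagged_partition_bounds(1,2,5)[of a a n t s \<delta> 0] by force

lemma fine_tagged_partition_exists:
  assumes "a \<le> b" "\<delta> > 0"
  obtains n t where "fine_tagged_partition a b n t t \<delta>" "fine_tagged_partition a b n t (\<lambda>j. t (Suc j)) \<delta>"
proof (cases "a = b")
  case True
  then show thesis by (intro that[of 0 "\<lambda>_. a"]) (simp_all add: fine_tagged_partition_def)
next
  case False
  obtain n :: nat where n: "(b - a) / \<delta> < n" using reals_Archimedean2 by blast
  then have "n > 0" using assms False by (metis divide_nonneg_pos diff_ge_0_iff_ge of_nat_0_less_iff order_le_less_trans)
  define h where "h = (b - a) / n"
  have "h < \<delta>" using n \<open>n > 0\<close> assms by (simp add: h_def divide_less_eq mult.commute)
  moreover have "0 < h" using assms False \<open>n > 0\<close> by (simp add: h_def)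
  moreover have "a + real n * h = b" using \<open>n > 0\<close> by (simp add: h_def)
  ultimately show thesis
    by (intro that[of n "\<lambda>j. a + real j * h"]) (auto simp: fine_tagged_partition_def algebra_simps)
qed

lemma has_RS_integral_unique:
  assumes "has_RS_integral f g a b I" "has_RS_integral f g a b J" "a \<le> b"
  shows "I = J"
proof -
  have "\<bar>I - J\<bar> \<le> e" if "e > 0" for e
  proof -
    obtain \<delta>1 where \<delta>1: "\<delta>1 > 0" "\<And>n t s. fine_tagged_partition a b n t s \<delta>1 \<Longrightarrow> \<bar>RS_sum f g n t s - I\<bar> < e/2"
      using has_RS_integralE[OF assms(1)] \<open>e > 0\<close> half_gt_zero by blast
    obtain \<delta>2 where \<delta>2: "\<delta>2 > 0" "\<And>n t s. fine_tagged_partition a b n t s \<delta>2 \<Longrightarrow> \<bar>RS_sum f g n t s - J\<bar> < e/2"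
      using has_RS_integralE[OF assms(2)] \<open>e > 0\<close> half_gt_zero by blast
    have "min \<delta>1 \<delta>2 > 0" using \<delta>1 \<delta>2 by simp
    then obtain n t where p: "fine_tagged_partition a b n t t (min \<delta>1 \<delta>2)"
      using fine_tagged_partition_exists[OF assms(3)] by metis
    have "\<bar>RS_sum f g n t t - I\<bar> < e/2" "\<bar>RS_sum f g n t t - J\<bar> < e/2"
      using \<delta>1(2) \<delta>2(2) fine_tagged_partition_mono[OF p] by simp_all
    then show ?thesis unfolding abs_less_iff abs_le_iff by linarith
  qed
  then show ?thesis using dense_eq0_I[of "I - J"] by simp
qed

lemma RS_integral_eqI: "has_RS_integral f g a b I \<Longrightarrow> a \<le> b \<Longrightarrow> RS_integral f g a b = I"
  unfolding RS_integral_def using has_RS_integral_unique by blast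

lemma has_RS_integral_degenerate: "has_RS_integral f g a a 0"
  unfolding has_RS_integral_iff by (auto simp: RS_sum_def intro!: exI[of _ 1] dest: fine_tagged_partition_degenerate)

lemma RS_integral_degenerate [simp]: "RS_integral f g a a = 0"
  by (rule RS_integral_eqI[OF has_RS_integral_degenerate]) simp

lemma has_RS_integral_cong:
  assumes "has_RS_integral f g a b I" "\<And>x. x \<in> {a..b} \<Longrightarrow> f x = f' x"
    and "\<And>x. x \<in> {a..b} \<Longrightarrow> g x - g a = g' x - g' a"
  shows "has_RS_integral f' g' a b I"
proof -
  have "RS_sum f g n t s = RS_sum f' g' n t s" if p: "fine_tagged_partition a b n t s \<delta>" for n t s \<delta>
    unfolding RS_sum_def
  proof (intro sum.cong refl)
    fix j assume "j \<in> {..<n}"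
    note r = fine_tagged_partition_bounds[OF p, of j]
    have "g (t (Suc j)) - g (t j) = (g (t (Suc j)) - g a) - (g (t j) - g a)" by simp
    also have "\<dots> = g' (t (Suc j)) - g' (t j)" using assms(3) r \<open>j \<in> {..<n}\<close> by simp
    finally show "f (s j) * (g (t (Suc j)) - g (t j)) = f' (s j) * (g' (t (Suc j)) - g' (t j))"
      using assms(2)[of "s j"] r \<open>j \<in> {..<n}\<close> by simp
  qed
  with assms(1) show ?thesis unfolding has_RS_integral_iff by metis
qed

lemma has_RS_integral_combine:
  assumes "has_RS_integral f1 g1 a b I1" "has_RS_integral f2 g2 a b I2"
    and "\<And>n t s. RS_sum f g n t s = RS_sum f1 g1 n t s + RS_sum f2 g2 n t s"
  shows "has_RS_integral f g a b (I1 + I2)"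
  unfolding has_RS_integral_iff
proof (intro allI impI)
  fix e :: real assume "e > 0"
  obtain \<delta>1 where \<delta>1: "\<delta>1 > 0" "\<And>n t s. fine_tagged_partition a b n t s \<delta>1 \<Longrightarrow> \<bar>RS_sum f1 g1 n t s - I1\<bar> < e/2"
    using has_RS_integralE[OF assms(1)] \<open>e > 0\<close> half_gt_zero by blast
  obtain \<delta>2 where \<delta>2: "\<delta>2 > 0" "\<And>n t s. fine_tagged_partition a b n t s \<delta>2 \<Longrightarrow> \<bar>RS_sum f2 g2 n t s - I2\<bar> < e/2"
    using has_RS_integralE[OF assms(2)] \<open>e > 0\<close> half_gt_zero by blast
  have "\<bar>RS_sum f g n t s - (I1 + I2)\<bar> < e" if "fine_tagged_partition a b n t s (min \<delta>1 \<delta>2)" for n t s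
  proof -
    have "\<bar>RS_sum f1 g1 n t s - I1\<bar> < e/2" "\<bar>RS_sum f2 g2 n t s - I2\<bar> < e/2"
      using \<delta>1(2) \<delta>2(2) fine_tagged_partition_mono[OF that] by simp_all
    then show ?thesis using assms(3)[of n t s] unfolding abs_less_iff by linarith
  qed
  then show "\<exists>\<delta>>0. \<forall>n t s. fine_tagged_partition a b n t s \<delta> \<longrightarrow> \<bar>RS_sum f g n t s - (I1 + I2)\<bar> < e"
    using \<delta>1(1) \<delta>2(1) by (intro exI[of _ "min \<delta>1 \<delta>2"]) auto
qed

lemma has_RS_integral_add:
  "has_RS_integral f1 g a b I1 \<Longrightarrow> has_RS_integral f2 g a b I2 \<Longrightarrow>
    has_RS_integral (\<lambda>x. f1 x + f2 x) g a b (I1 + I2)"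
  by (rule has_RS_integral_combine) (simp_all add: RS_sum_def distrib_right sum.distrib)

lemma has_RS_integral_sum_list:
  "(\<And>z. z \<in> set zs \<Longrightarrow> has_RS_integral (f z) g a b (I z)) \<Longrightarrow>
    has_RS_integral (\<lambda>x. \<Sum>z\<leftarrow>zs. f z x) g a b (\<Sum>z\<leftarrow>zs. I z)"
proof (induction zs)
  case Nil
  then show ?case by (simp add: has_RS_integral_iff RS_sum_def)
qed (simp add: has_RS_integral_add)

lemma has_RS_integral_diff_integrator:
  assumes "has_RS_integral f g1 a b I1" "has_RS_integral f g2 a b I2"
  shows "has_RS_integral f (\<lambda>x. g1 x - g2 x) a b (I1 - I2)"
proof -
  have neg: "RS_sum f (\<lambda>x. - g2 x) n t s = - RS_sum f g2 n t s" for n t s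
    unfolding RS_sum_def by (simp flip: sum_negf add: algebra_simps)
  then have "RS_sum f (\<lambda>x. - g2 x) n t s - (- I2) = - (RS_sum f g2 n t s - I2)" for n t s
    by simp
  then have "has_RS_integral f (\<lambda>x. - g2 x) a b (- I2)"
    using assms(2) unfolding has_RS_integral_iff by (metis abs_minus_cancel)
  from has_RS_integral_combine[OF assms(1) this] show ?thesis
    by (simp add: neg RS_sum_def algebra_simps sum_subtractf)
qed

text \<open>Summation by parts: with right end point tags for \<open>F\<close> and left end point tags for \<open>G\<close>,
  the two Riemann--Stieltjes sums add up to a telescoping sum.\<close>

lemma RS_integration_by_parts:
  assumes "a \<le> b" "has_RS_integral F G a b I1" "has_RS_integral G F a b I2"
  shows "F b * G b - F a * G a = I1 + I2"
proof -
  have "\<bar>(F b * G b - F a * G a) - (I1 + I2)\<bar> \<le> e" if "e > 0" for e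
  proof -
    obtain \<delta>1 where \<delta>1: "\<delta>1 > 0" "\<And>n t s. fine_tagged_partition a b n t s \<delta>1 \<Longrightarrow> \<bar>RS_sum F G n t s - I1\<bar> < e/2"
      using has_RS_integralE[OF assms(2)] \<open>e > 0\<close> half_gt_zero by blast
    obtain \<delta>2 where \<delta>2: "\<delta>2 > 0" "\<And>n t s. fine_tagged_partition a b n t s \<delta>2 \<Longrightarrow> \<bar>RS_sum G F n t s - I2\<bar> < e/2"
      using has_RS_integralE[OF assms(3)] \<open>e > 0\<close> half_gt_zero by blast
    obtain n t where l: "fine_tagged_partition a b n t t (min \<delta>1 \<delta>2)"
      and r: "fine_tagged_partition a b n t (\<lambda>j. t (Suc j)) (min \<delta>1 \<delta>2)"
      using fine_tagged_partition_exists[OF assms(1), of "min \<delta>1 \<delta>2"] \<delta>1 \<delta>2 by auto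
    have "RS_sum F G n t (\<lambda>j. t (Suc j)) + RS_sum G F n t t = (\<Sum>j<n. F (t (Suc j)) * G (t (Suc j)) - F (t j) * G (t j))"
      unfolding RS_sum_def sum.distrib[symmetric] by (intro sum.cong refl) (simp add: algebra_simps)
    also have "\<dots> = F b * G b - F a * G a"
      using sum_lessThan_telescope[of "\<lambda>j. F (t j) * G (t j)" n] l by (simp add: fine_tagged_partition_def)
    moreover have "\<bar>RS_sum F G n t (\<lambda>j. t (Suc j)) - I1\<bar> < e/2" "\<bar>RS_sum G F n t t - I2\<bar> < e/2"
      using \<delta>1(2)[OF fine_tagged_partition_mono[OF r]] \<delta>2(2)[OF fine_tagged_partition_mono[OF l]] by simp_all
    ultimately show ?thesis unfolding abs_less_iff abs_le_iff by linarith
  qed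
  then show ?thesis using dense_eq0_I[of "F b * G b - F a * G a - (I1 + I2)"] by simp
qed

lemma has_RS_integral_abs_le:
  assumes "has_RS_integral f g a b I" "a \<le> b"
    and "\<And>n t. is_partition a b n t \<Longrightarrow> \<bar>RS_sum f g n t t\<bar> \<le> B"
  shows "\<bar>I\<bar> \<le> B"
proof (rule field_le_epsilon)
  fix e :: real assume "e > 0"
  then obtain \<delta> where \<delta>: "\<delta> > 0" "\<And>n t s. fine_tagged_partition a b n t s \<delta> \<Longrightarrow> \<bar>RS_sum f g n t s - I\<bar> < e"
    using has_RS_integralE[OF assms(1)] by blast
  obtain n t where "fine_tagged_partition a b n t t \<delta>"
    using fine_tagged_partition_exists[OF assms(2) \<delta>(1)] by metis
  then show "\<bar>I\<bar> \<le> B + e"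
    using \<delta>(2) assms(3) fine_tagged_partition_is_partition by fastforce
qed

section \<open>Lebesgue--Stieltjes primitives\<close>

definition continuous_mono :: "(real \<Rightarrow> real) \<Rightarrow> bool" where
  "continuous_mono G \<longleftrightarrow> mono G \<and> continuous_on UNIV G"

definition LS_primitive :: "(real \<Rightarrow> real) \<Rightarrow> real \<Rightarrow> (real \<Rightarrow> real) \<Rightarrow> real \<Rightarrow> real" where
  "LS_primitive G a h x = (LINT u:{a<..x}|interval_measure G. h u)"

lemma measure_interval_measure_continuous_mono:
  assumes "continuous_mono G" "c \<le> d"
  shows "emeasure (interval_measure G) {c<..d} = G d - G c"
    and "measure (interval_measure G) {c<..d} = G d - G c"
proof -
  have mono: "\<And>x y. x \<le> y \<Longrightarrow> G x \<le> G y" and "\<And>x. isCont G x"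
    using assms(1) by (auto simp: continuous_mono_def monoD continuous_on_eq_continuous_at)
  then have right_cont: "continuous (at_right x) G" for x
    by (simp add: continuous_at_imp_continuous_at_within)
  show "emeasure (interval_measure G) {c<..d} = G d - G c"
    by (rule emeasure_interval_measure_Ioc[OF assms(2) mono right_cont])
  show "measure (interval_measure G) {c<..d} = G d - G c"
    by (rule measure_interval_measure_Ioc[OF assms(2) mono right_cont])
qed

lemma emeasure_interval_measure_finite:
  "continuous_mono G \<Longrightarrow> emeasure (interval_measure G) {c<..d} < \<infinity>"
  by (cases "c \<le> d") (simp_all add: measure_interval_measure_continuous_mono)

lemma continuous_on_Icc_abs_bound:
  fixes h :: "real \<Rightarrow> real"
  assumes "continuous_on {c..d} h"
  obtains B where "B > 0" "\<And>x. x \<in> {c..d} \<Longrightarrow> \<bar>h x\<bar> \<le> B"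
proof -
  have "bounded (h ` {c..d})" by (intro compact_imp_bounded compact_continuous_image assms compact_Icc)
  then show thesis using that unfolding bounded_pos by auto
qed

lemma set_integrable_interval_measure:
  fixes h :: "real \<Rightarrow> real"
  assumes "continuous_mono G" "continuous_on {c..d} h"
  shows "set_integrable (interval_measure G) {c<..d} h"
proof -
  obtain B where B: "\<And>x. x \<in> {c..d} \<Longrightarrow> \<bar>h x\<bar> \<le> B" using continuous_on_Icc_abs_bound[OF assms(2)] by blast
  have "(\<lambda>x. indicator {c<..d} x *\<^sub>R h x) \<in> borel_measurable borel"
    using assms(2) by (intro borel_measurable_continuous_on_indicator) (auto intro: continuous_on_subset)
  then have "(\<lambda>x. indicator {c<..d} x *\<^sub>R h x) \<in> borel_measurable (interval_measure G)"
    by (simp add: measurable_def)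
  then show ?thesis
    unfolding set_integrable_def
    using emeasure_interval_measure_finite[OF assms(1)] B
    by (intro integrableI_bounded_set[where A = "{c<..d}" and B = B]) (auto split: split_indicator)
qed

lemma abs_set_integral_interval_measure_le:
  fixes h :: "real \<Rightarrow> real"
  assumes "continuous_mono G" "continuous_on {c..d} h" "c \<le> d" "\<And>x. x \<in> {c<..d} \<Longrightarrow> \<bar>h x\<bar> \<le> B"
  shows "\<bar>LINT u:{c<..d}|interval_measure G. h u\<bar> \<le> B * (G d - G c)"
proof -
  have int: "set_integrable (interval_measure G) {c<..d} h"
    by (rule set_integrable_interval_measure[OF assms(1,2)])
  have "\<bar>LINT u:{c<..d}|interval_measure G. h u\<bar> \<le> (LINT u:{c<..d}|interval_measure G. \<bar>h u\<bar>)"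
    using set_integral_norm_bound[OF int] by simp
  also have "\<dots> \<le> (LINT u:{c<..d}|interval_measure G. B)"
    using assms(4) set_integrable_interval_measure[OF assms(1), of c d "\<lambda>_. B"]
    by (intro set_integral_mono[OF set_integrable_abs[OF int]]) auto
  also have "\<dots> = B * (G d - G c)"
    using emeasure_interval_measure_finite[OF assms(1)] measure_interval_measure_continuous_mono[OF assms(1,3)]
    by (simp add: set_integral_const)
  finally show ?thesis .
qed

lemma LS_primitive_diff:
  assumes "continuous_mono G" "continuous_on {a..b} h" "a \<le> x" "x \<le> y" "y \<le> b"
  shows "LS_primitive G a h y - LS_primitive G a h x = (LINT u:{x<..y}|interval_measure G. h u)"
proof -
  have "set_integrable (interval_measure G) {a<..x} h" "set_integrable (interval_measure G) {x<..y} h"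
    using assms by (auto intro!: set_integrable_interval_measure intro: continuous_on_subset)
  moreover have "{a<..y} = {a<..x} \<union> {x<..y}" "{a<..x} \<inter> {x<..y} = {}"
    using assms by auto
  ultimately show ?thesis by (simp add: LS_primitive_def set_integral_Un)
qed

lemma LS_primitive_start [simp]: "LS_primitive G a h a = 0"
  by (simp add: LS_primitive_def set_lebesgue_integral_def)

lemma LS_primitive_one: "continuous_mono G \<Longrightarrow> a \<le> x \<Longrightarrow> LS_primitive G a (\<lambda>_. 1) x = G x - G a"
  using emeasure_interval_measure_finite[of G a x] measure_interval_measure_continuous_mono[of G a x]
  by (simp add: LS_primitive_def set_integral_const)

lemma continuous_on_LS_primitive:
  assumes G: "continuous_mono G" and h: "continuous_on {a..b} h"
  shows "continuous_on {a..b} (LS_primitive G a h)"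
  unfolding continuous_on_iff dist_real_def
proof (intro ballI allI impI)
  fix x e :: real assume x: "x \<in> {a..b}" and "e > 0"
  obtain B where B: "B > 0" "\<And>x. x \<in> {a..b} \<Longrightarrow> \<bar>h x\<bar> \<le> B" using continuous_on_Icc_abs_bound[OF h] by blast
  have lipschitz: "\<bar>LS_primitive G a h y - LS_primitive G a h x\<bar> \<le> B * \<bar>G y - G x\<bar>" if "y \<in> {a..b}" for y
  proof (cases "x \<le> y")
    case True
    then show ?thesis
      using LS_primitive_diff[OF G h, of x y] abs_set_integral_interval_measure_le[OF G, of x y h B]
        continuous_on_subset[OF h, of "{x..y}"] B(2) x that G
      by (auto simp: continuous_mono_def monoD)
  next
    case False
    then show ?thesis
      using LS_primitive_diff[OF G h, of y x] abs_set_integral_interval_measure_le[OF G, of y x h B]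
        continuous_on_subset[OF h, of "{y..x}"] B(2) x that G
      by (auto simp: continuous_mono_def monoD abs_minus_commute)
  qed
  obtain d where d: "d > 0" "\<And>y. \<bar>y - x\<bar> < d \<Longrightarrow> \<bar>G y - G x\<bar> < e / B"
    using G \<open>e > 0\<close> B(1) unfolding continuous_mono_def continuous_on_iff dist_real_def
    by (metis UNIV_I divide_pos_pos)
  have "\<bar>LS_primitive G a h y - LS_primitive G a h x\<bar> < e" if "y \<in> {a..b}" "\<bar>y - x\<bar> < d" for y
  proof -
    have "B * \<bar>G y - G x\<bar> < e" using d(2)[OF that(2)] B(1) by (simp add: less_divide_eq mult.commute)
    then show ?thesis using lipschitz[OF that(1)] by linarith
  qed
  then show "\<exists>d>0. \<forall>y\<in>{a..b}. \<bar>y - x\<bar> < d \<longrightarrow> \<bar>LS_primitive G a h y - LS_primitive G a h x\<bar> < e"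
    using d(1) by blast
qed

lemma LS_primitive_increment_diff:
  assumes G: "continuous_mono G" and h: "continuous_on {a..b} h" and k: "continuous_on {a..b} k"
    and "a \<le> x" "x \<le> y" "y \<le> b"
  shows "k s * (LS_primitive G a h y - LS_primitive G a h x)
      - (LS_primitive G a (\<lambda>u. k u * h u) y - LS_primitive G a (\<lambda>u. k u * h u) x)
    = (LINT u:{x<..y}|interval_measure G. k s * h u - k u * h u)"
proof -
  have kh: "continuous_on {a..b} (\<lambda>u. k u * h u)" by (intro continuous_intros h k)
  have "continuous_on {x..y} h" "continuous_on {x..y} (\<lambda>u. k u * h u)"
    using assms by (auto intro: continuous_on_subset[OF h] continuous_on_subset[OF kh])
  then have "set_integrable (interval_measure G) {x<..y} h"
      "set_integrable (interval_measure G) {x<..y} (\<lambda>u. k u * h u)"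
    by (auto intro: set_integrable_interval_measure[OF G])
  then show ?thesis
    using LS_primitive_diff[OF G h, of x y] LS_primitive_diff[OF G kh, of x y] assms by simp
qed

lemma RS_sum_LS_primitive_error:
  assumes G: "continuous_mono G" and h: "continuous_on {a..b} h" and k: "continuous_on {a..b} k"
    and B: "\<And>x. x \<in> {a..b} \<Longrightarrow> \<bar>h x\<bar> \<le> B"
    and osc: "\<And>x y. x \<in> {a..b} \<Longrightarrow> y \<in> {a..b} \<Longrightarrow> \<bar>x - y\<bar> < \<delta> \<Longrightarrow> \<bar>k x - k y\<bar> \<le> \<eta>"
    and p: "fine_tagged_partition a b n t s \<delta>"
  shows "\<bar>RS_sum k (LS_primitive G a h) n t s - LS_primitive G a (\<lambda>u. k u * h u) b\<bar> \<le> \<eta> * B * (G b - G a)"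
proof -
  let ?kh = "\<lambda>u. k u * h u"
  let ?I = "\<lambda>j. LINT u:{t j<..t (Suc j)}|interval_measure G. k (s j) * h u - k u * h u"
  have t: "t 0 = a" "t n = b" using p by (auto simp: fine_tagged_partition_def)
  note r = fine_tagged_partition_bounds[OF p]
  have "k (s j) * (LS_primitive G a h (t (Suc j)) - LS_primitive G a h (t j))
      - (LS_primitive G a ?kh (t (Suc j)) - LS_primitive G a ?kh (t j)) = ?I j" if "j < n" for j
    using r[OF that] by (intro LS_primitive_increment_diff[OF G h k]) auto
  moreover have "LS_primitive G a ?kh b = (\<Sum>j<n. LS_primitive G a ?kh (t (Suc j)) - LS_primitive G a ?kh (t j))"
    using sum_lessThan_telescope[of "\<lambda>j. LS_primitive G a ?kh (t j)" n] t by simp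
  ultimately have eq: "RS_sum k (LS_primitive G a h) n t s - LS_primitive G a ?kh b = (\<Sum>j<n. ?I j)"
    by (simp add: RS_sum_def flip: sum_subtractf)
  have "\<bar>?I j\<bar> \<le> \<eta> * B * (G (t (Suc j)) - G (t j))" if j: "j < n" for j
  proof (rule abs_set_integral_interval_measure_le[OF G])
    show "continuous_on {t j..t (Suc j)} (\<lambda>u. k (s j) * h u - k u * h u)"
      using r[OF j] by (intro continuous_intros continuous_on_subset[OF h] continuous_on_subset[OF k]) auto
    fix u assume "u \<in> {t j<..t (Suc j)}"
    then have "\<bar>k (s j) - k u\<bar> \<le> \<eta>" "\<bar>h u\<bar> \<le> B" using r[OF j] by (auto intro!: osc B)
    then have "\<bar>k (s j) - k u\<bar> * \<bar>h u\<bar> \<le> \<eta> * B" by (intro mult_mono) auto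
    then show "\<bar>k (s j) * h u - k u * h u\<bar> \<le> \<eta> * B" by (simp add: left_diff_distrib[symmetric] abs_mult)
  qed (use r[OF j] in auto)
  then have "\<bar>\<Sum>j<n. ?I j\<bar> \<le> (\<Sum>j<n. \<eta> * B * (G (t (Suc j)) - G (t j)))"
    by (intro order_trans[OF sum_abs] sum_mono) auto
  also have "\<dots> = \<eta> * B * (G b - G a)"
    using sum_lessThan_telescope[of "\<lambda>j. G (t j)" n] t by (simp flip: sum_distrib_left)
  finally show ?thesis unfolding eq .
qed

lemma has_RS_integral_LS_primitive:
  assumes G: "continuous_mono G" and "a \<le> b"
    and h: "continuous_on {a..b} h" and k: "continuous_on {a..b} k"
  shows "has_RS_integral k (LS_primitive G a h) a b (LS_primitive G a (\<lambda>u. k u * h u) b)"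
  unfolding has_RS_integral_iff
proof (intro allI impI)
  fix e :: real assume "e > 0"
  obtain B where B: "B > 0" "\<And>x. x \<in> {a..b} \<Longrightarrow> \<bar>h x\<bar> \<le> B" using continuous_on_Icc_abs_bound[OF h] by blast
  have "G a \<le> G b" using G \<open>a \<le> b\<close> by (simp add: continuous_mono_def monoD)
  define \<eta> where "\<eta> = e / (B * (G b - G a + 1))"
  have "\<eta> > 0" using \<open>e > 0\<close> B(1) \<open>G a \<le> G b\<close> by (simp add: \<eta>_def)
  have "(G b - G a) / (G b - G a + 1) < 1" using \<open>G a \<le> G b\<close> by simp
  then have "e * ((G b - G a) / (G b - G a + 1)) < e"
    using \<open>e > 0\<close> mult_strict_left_mono[of _ 1 e] by (simp del: times_divide_eq_right)
  moreover have "\<eta> * B * (G b - G a) = e * ((G b - G a) / (G b - G a + 1))"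
    using B(1) by (simp add: \<eta>_def)
  ultimately have "\<eta> * B * (G b - G a) < e" by simp
  obtain \<delta> where \<delta>: "\<delta> > 0" "\<And>x y. x \<in> {a..b} \<Longrightarrow> y \<in> {a..b} \<Longrightarrow> \<bar>x - y\<bar> < \<delta> \<Longrightarrow> \<bar>k x - k y\<bar> \<le> \<eta>"
    using compact_uniformly_continuous[OF k compact_Icc] \<open>\<eta> > 0\<close>
    unfolding uniformly_continuous_on_def dist_real_def by (metis less_imp_le)
  have "\<bar>RS_sum k (LS_primitive G a h) n t s - LS_primitive G a (\<lambda>u. k u * h u) b\<bar> < e"
    if "fine_tagged_partition a b n t s \<delta>" for n t s
  proof -
    have "\<bar>RS_sum k (LS_primitive G a h) n t s - LS_primitive G a (\<lambda>u. k u * h u) b\<bar> \<le> \<eta> * B * (G b - G a)"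
      using RS_sum_LS_primitive_error[OF G h k, where B = B and \<delta> = \<delta> and \<eta> = \<eta>] B(2) \<delta>(2) that
      by blast
    then show ?thesis using \<open>\<eta> * B * (G b - G a) < e\<close> by linarith
  qed
  then show "\<exists>\<delta>>0. \<forall>n t s. fine_tagged_partition a b n t s \<delta> \<longrightarrow>
      \<bar>RS_sum k (LS_primitive G a h) n t s - LS_primitive G a (\<lambda>u. k u * h u) b\<bar> < e"
    using \<delta>(1) by blast
qed

section \<open>Riemann--Stieltjes integrals against functions of bounded variation\<close>

lemma clamp_real_mono: "x \<le> y \<Longrightarrow> clamp a b x \<le> clamp a b (y::real)"
  unfolding clamp_def Basis_real_def by auto

lemma clamp_real_in: "a \<le> b \<Longrightarrow> clamp a b (x::real) \<in> {a..b}"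
  using clamp_in_interval[of a b x] by simp

locale continuous_bv =
  fixes g :: "real \<Rightarrow> real" and a b :: real
  assumes le: "a \<le> b" and bv: "bounded_variation_on g a b" and cont: "continuous_on {a..b} g"
begin

text \<open>The Jordan decomposition \<open>g = (V + g) - V\<close> on \<open>[a, b]\<close>, where \<open>V x\<close> is the variation of \<open>g\<close>
  on \<open>[a, x]\<close>, with both parts extended constantly outside \<open>[a, b]\<close>.\<close>

definition jordan_pos :: "real \<Rightarrow> real" where
  "jordan_pos = ext_cont (\<lambda>x. variation g a x + g x) a b"

definition jordan_neg :: "real \<Rightarrow> real" where
  "jordan_neg = ext_cont (variation g a) a b"

lemma continuous_mono_jordan: "continuous_mono jordan_pos" "continuous_mono jordan_neg"
proof -
  have "continuous_on (cbox a b) (variation g a)"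
    using continuous_on_variation[OF bv cont] by simp
  moreover from this have "continuous_on (cbox a b) (\<lambda>x. variation g a x + g x)"
    using cont by (simp add: continuous_on_add)
  ultimately have "continuous_on UNIV jordan_pos" "continuous_on UNIV jordan_neg"
    unfolding jordan_pos_def jordan_neg_def by (simp_all add: continuous_on_ext_cont)
  moreover have "variation g a (clamp a b x) + \<bar>g (clamp a b y) - g (clamp a b x)\<bar> \<le> variation g a (clamp a b y)"
    if "x \<le> y" for x y
    using clamp_real_in[OF le] clamp_real_mono[OF that]
    by (intro variation_add_abs_le[OF bv]) auto
  then have "mono jordan_pos" "mono jordan_neg"
    unfolding jordan_pos_def jordan_neg_def ext_cont_def mono_def by (smt (verit))+
  ultimately show "continuous_mono jordan_pos" "continuous_mono jordan_neg"
    by (simp_all add: continuous_mono_def)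
qed

lemma jordan_decomposition: "x \<in> {a..b} \<Longrightarrow> jordan_pos x - jordan_neg x = g x"
  by (simp add: jordan_pos_def jordan_neg_def)

definition RS_primitive :: "(real \<Rightarrow> real) \<Rightarrow> real \<Rightarrow> real" where
  "RS_primitive h x = LS_primitive jordan_pos a h x - LS_primitive jordan_neg a h x"

lemma has_RS_integral_RS_primitive_integrator:
  assumes h: "continuous_on {a..b} h" and k: "continuous_on {a..b} k" and t: "t \<in> {a..b}"
  shows "has_RS_integral k (RS_primitive h) a t (RS_primitive (\<lambda>u. k u * h u) t)"
  unfolding RS_primitive_def
  using t continuous_on_subset[OF h, of "{a..t}"] continuous_on_subset[OF k, of "{a..t}"]
  by (intro has_RS_integral_diff_integrator has_RS_integral_LS_primitive continuous_mono_jordan) auto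

lemma has_RS_integral_RS_primitive:
  assumes h: "continuous_on {a..b} h" and t: "t \<in> {a..b}"
  shows "has_RS_integral h g a t (RS_primitive h t)"
proof -
  have "has_RS_integral h (RS_primitive (\<lambda>_. 1)) a t (RS_primitive h t)"
    using has_RS_integral_RS_primitive_integrator[OF _ h t, of "\<lambda>_. 1"] by simp
  moreover have "RS_primitive (\<lambda>_. 1) x = g x - g a" if "x \<in> {a..b}" for x
    using that le jordan_decomposition[of x] jordan_decomposition[of a]
    by (simp add: RS_primitive_def LS_primitive_one continuous_mono_jordan)
  ultimately show ?thesis
    using t by (elim has_RS_integral_cong) auto
qed

lemma RS_integral_eq_RS_primitive:
  "continuous_on {a..b} h \<Longrightarrow> t \<in> {a..b} \<Longrightarrow> RS_integral h g a t = RS_primitive h t"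
  using RS_integral_eqI[OF has_RS_integral_RS_primitive] by simp

lemma has_RS_integral_RS_integral:
  "continuous_on {a..b} h \<Longrightarrow> t \<in> {a..b} \<Longrightarrow> has_RS_integral h g a t (RS_integral h g a t)"
  using has_RS_integral_RS_primitive RS_integral_eq_RS_primitive by simp

lemma continuous_on_RS_integral:
  assumes h: "continuous_on {a..b} h"
  shows "continuous_on {a..b} (RS_integral h g a)"
proof -
  have "continuous_on {a..b} (RS_primitive h)"
    unfolding RS_primitive_def
    by (intro continuous_intros continuous_on_LS_primitive continuous_mono_jordan h)
  then show ?thesis
    by (rule continuous_on_cong[THEN iffD1, rotated 2]) (simp_all add: RS_integral_eq_RS_primitive[OF h])
qed

lemma has_RS_integral_RS_integral_integrator:
  assumes h: "continuous_on {a..b} h" and k: "continuous_on {a..b} k" and t: "t \<in> {a..b}"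
  shows "has_RS_integral k (RS_integral h g a) a t (RS_integral (\<lambda>u. k u * h u) g a t)"
proof -
  have "has_RS_integral k (RS_integral h g a) a t (RS_primitive (\<lambda>u. k u * h u) t)"
    using has_RS_integral_RS_primitive_integrator[OF h k t]
    by (rule has_RS_integral_cong) (use t RS_integral_eq_RS_primitive[OF h] in \<open>auto simp: RS_primitive_def\<close>)
  moreover have "continuous_on {a..b} (\<lambda>u. k u * h u)" by (intro continuous_intros h k)
  ultimately show ?thesis using RS_integral_eq_RS_primitive t by simp
qed

end

section \<open>Iterated integrals along a path\<close>

fun shuffle_words :: "'a list \<Rightarrow> 'a list \<Rightarrow> 'a list list" where
  "shuffle_words [] v = [v]"
| "shuffle_words u [] = [u]"
| "shuffle_words (e # u) (f # v) = map (Cons e) (shuffle_words u (f # v)) @ map (Cons f) (shuffle_words (e # u) v)"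

lemma set_shuffle_words: "z \<in> set (shuffle_words u v) \<Longrightarrow> set z \<subseteq> set u \<union> set v"
  by (induction u v arbitrary: z rule: shuffle_words.induct) fastforce+

locale bv_path =
  fixes \<gamma> :: "real \<Rightarrow> 'v::euclidean_space" and a b :: real
  assumes le: "a \<le> b" and cont: "continuous_on {a..b} \<gamma>" and bv: "bounded_variation_on \<gamma> a b"
begin

lemma continuous_bv_coordinate: "continuous_bv (\<lambda>u. \<gamma> u \<bullet> e) a b"
proof
  show "a \<le> b" by (rule le)
  show "continuous_on {a..b} (\<lambda>u. \<gamma> u \<bullet> e)" by (intro continuous_intros cont)
  obtain M where M: "\<And>n t. is_partition a b n t \<Longrightarrow> (\<Sum>j<n. norm (\<gamma> (t (Suc j)) - \<gamma> (t j))) \<le> M"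
    using bv unfolding bounded_variation_on_def is_partition_def by blast
  have "(\<Sum>j<n. norm (\<gamma> (t (Suc j)) \<bullet> e - \<gamma> (t j) \<bullet> e)) \<le> M * norm e" if "is_partition a b n t" for n t
  proof -
    have "(\<Sum>j<n. norm (\<gamma> (t (Suc j)) \<bullet> e - \<gamma> (t j) \<bullet> e)) \<le> (\<Sum>j<n. norm (\<gamma> (t (Suc j)) - \<gamma> (t j)) * norm e)"
      by (intro sum_mono) (metis Cauchy_Schwarz_ineq2 inner_diff_left real_norm_def)
    also have "\<dots> \<le> M * norm e" using M[OF that] by (simp flip: sum_distrib_right add: mult_right_mono)
    finally show ?thesis .
  qed
  then show "bounded_variation_on (\<lambda>u. \<gamma> u \<bullet> e) a b"
    unfolding bounded_variation_on_def is_partition_def by blast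
qed

abbreviation S :: "'v list \<Rightarrow> real \<Rightarrow> real" where
  "S w \<equiv> sig_rev \<gamma> a w"

lemma sig_rev_Cons_fun: "S (e # w) = RS_integral (S w) (\<lambda>u. \<gamma> u \<bullet> e) a"
  by (rule ext) simp

lemma sig_rev_start: "w \<noteq> [] \<Longrightarrow> S w a = 0"
  by (cases w) auto

lemma continuous_on_sig_rev: "continuous_on {a..b} (S w)"
proof (induction w)
  case (Cons e w)
  interpret continuous_bv "\<lambda>u. \<gamma> u \<bullet> e" a b by (rule continuous_bv_coordinate)
  show ?case unfolding sig_rev_Cons_fun by (rule continuous_on_RS_integral[OF Cons.IH])
qed simp

lemma has_RS_integral_sig_rev:
  assumes "t \<in> {a..b}"
  shows "has_RS_integral (S w) (\<lambda>u. \<gamma> u \<bullet> e) a t (S (e # w) t)"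
proof -
  interpret continuous_bv "\<lambda>u. \<gamma> u \<bullet> e" a b by (rule continuous_bv_coordinate)
  show ?thesis using has_RS_integral_RS_integral[OF continuous_on_sig_rev assms] by simp
qed

lemma has_RS_integral_sig_rev_integrator:
  assumes "t \<in> {a..b}"
  shows "has_RS_integral (S v) (S (e # u)) a t (RS_integral (\<lambda>r. S v r * S u r) (\<lambda>r. \<gamma> r \<bullet> e) a t)"
proof -
  interpret continuous_bv "\<lambda>u. \<gamma> u \<bullet> e" a b by (rule continuous_bv_coordinate)
  show ?thesis
    unfolding sig_rev_Cons_fun
    by (rule has_RS_integral_RS_integral_integrator[OF continuous_on_sig_rev continuous_on_sig_rev assms])
qed

text \<open>The shuffle identity, by induction on the two words: integration by parts splits the product of
  two iterated integrals according to which integrator comes last.\<close>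

lemma sig_rev_shuffle: "t \<in> {a..b} \<Longrightarrow> S u t * S v t = (\<Sum>z\<leftarrow>shuffle_words u v. S z t)"
proof (induction u v arbitrary: t rule: shuffle_words.induct)
  case (3 e u f v)
  define I1 where "I1 = RS_integral (\<lambda>r. S (e # u) r * S v r) (\<lambda>r. \<gamma> r \<bullet> f) a t"
  define I2 where "I2 = RS_integral (\<lambda>r. S (f # v) r * S u r) (\<lambda>r. \<gamma> r \<bullet> e) a t"
  have t: "t \<in> {a..b}" "a \<le> t" using "3.prems" by auto
  have "S (e # u) t * S (f # v) t = I1 + I2"
    using RS_integration_by_parts[OF t(2) has_RS_integral_sig_rev_integrator[OF t(1)]
        has_RS_integral_sig_rev_integrator[OF t(1)]]
    by (simp add: sig_rev_start I1_def I2_def)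
  moreover have "I1 = (\<Sum>z\<leftarrow>shuffle_words (e # u) v. S (f # z) t)"
  proof -
    have "has_RS_integral (\<lambda>x. \<Sum>z\<leftarrow>shuffle_words (e # u) v. S z x) (\<lambda>r. \<gamma> r \<bullet> f) a t
        (\<Sum>z\<leftarrow>shuffle_words (e # u) v. S (f # z) t)"
      by (intro has_RS_integral_sum_list has_RS_integral_sig_rev t)
    then have "has_RS_integral (\<lambda>r. S (e # u) r * S v r) (\<lambda>r. \<gamma> r \<bullet> f) a t
        (\<Sum>z\<leftarrow>shuffle_words (e # u) v. S (f # z) t)"
      by (rule has_RS_integral_cong) (use t "3.IH"(2) in auto)
    then show ?thesis unfolding I1_def using t by (intro RS_integral_eqI) auto
  qed
  moreover have "I2 = (\<Sum>z\<leftarrow>shuffle_words u (f # v). S (e # z) t)"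
  proof -
    have "has_RS_integral (\<lambda>x. \<Sum>z\<leftarrow>shuffle_words u (f # v). S z x) (\<lambda>r. \<gamma> r \<bullet> e) a t
        (\<Sum>z\<leftarrow>shuffle_words u (f # v). S (e # z) t)"
      by (intro has_RS_integral_sum_list has_RS_integral_sig_rev t)
    then have "has_RS_integral (\<lambda>r. S (f # v) r * S u r) (\<lambda>r. \<gamma> r \<bullet> e) a t
        (\<Sum>z\<leftarrow>shuffle_words u (f # v). S (e # z) t)"
      by (rule has_RS_integral_cong) (use t "3.IH"(1) in \<open>auto simp: mult.commute\<close>)
    then show ?thesis unfolding I2_def using t by (intro RS_integral_eqI) auto
  qed
  ultimately show ?case by (simp add: comp_def)
qed simp_all


definition basis_variation :: "real \<Rightarrow> real" where
  "basis_variation t = (\<Sum>e\<in>Basis. variation (\<lambda>u. \<gamma> u \<bullet> e) a t)"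

lemma basis_variation_start: "basis_variation a = 0"
  by (simp add: basis_variation_def)

lemma variation_coordinate_add_abs_le:
  "a \<le> x \<Longrightarrow> x \<le> y \<Longrightarrow> y \<le> b \<Longrightarrow>
    variation (\<lambda>u. \<gamma> u \<bullet> e) a x + \<bar>\<gamma> y \<bullet> e - \<gamma> x \<bullet> e\<bar> \<le> variation (\<lambda>u. \<gamma> u \<bullet> e) a y"
  using continuous_bv.bv[OF continuous_bv_coordinate] by (rule variation_add_abs_le)

lemma abs_coordinate_diff_le_basis_variation:
  assumes e: "e \<in> Basis" and xy: "a \<le> x" "x \<le> y" "y \<le> b"
  shows "\<bar>\<gamma> y \<bullet> e - \<gamma> x \<bullet> e\<bar> \<le> basis_variation y - basis_variation x"
proof -
  have "\<bar>\<gamma> y \<bullet> e - \<gamma> x \<bullet> e\<bar> \<le> variation (\<lambda>u. \<gamma> u \<bullet> e) a y - variation (\<lambda>u. \<gamma> u \<bullet> e) a x"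
    using variation_coordinate_add_abs_le[OF xy, of e] by linarith
  also have "\<dots> \<le> (\<Sum>e'\<in>Basis. variation (\<lambda>u. \<gamma> u \<bullet> e') a y - variation (\<lambda>u. \<gamma> u \<bullet> e') a x)"
  proof (rule member_le_sum[OF e])
    fix e' assume "e' \<in> Basis - {e}"
    show "0 \<le> variation (\<lambda>u. \<gamma> u \<bullet> e') a y - variation (\<lambda>u. \<gamma> u \<bullet> e') a x"
      using variation_coordinate_add_abs_le[OF xy, of e'] by linarith
  qed simp
  also have "\<dots> = basis_variation y - basis_variation x" by (simp add: basis_variation_def sum_subtractf)
  finally show ?thesis .
qed

lemma basis_variation_mono: "a \<le> x \<Longrightarrow> x \<le> y \<Longrightarrow> y \<le> b \<Longrightarrow> basis_variation x \<le> basis_variation y"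
  using abs_coordinate_diff_le_basis_variation[OF SOME_Basis] by fastforce

lemma basis_variation_nonneg: "a \<le> x \<Longrightarrow> x \<le> b \<Longrightarrow> 0 \<le> basis_variation x"
  using basis_variation_mono[of a x] basis_variation_start le by simp

end

lemma power_div_fact_mult_diff_le:
  fixes x y :: real
  assumes "0 \<le> x" "x \<le> y"
  shows "x ^ k / fact k * (y - x) \<le> (y ^ Suc k - x ^ Suc k) / fact (Suc k)"
proof -
  have "(\<Sum>i<Suc k. x ^ k) \<le> (\<Sum>i<Suc k. x ^ (Suc k - Suc i) * y ^ i)"
  proof (intro sum_mono)
    fix i assume "i \<in> {..<Suc k}"
    then have "x ^ k = x ^ (Suc k - Suc i) * x ^ i" by (simp flip: power_add)
    also have "\<dots> \<le> x ^ (Suc k - Suc i) * y ^ i" using assms by (intro mult_left_mono power_mono) auto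
    finally show "x ^ k \<le> x ^ (Suc k - Suc i) * y ^ i" .
  qed
  then have "(y - x) * (real (Suc k) * x ^ k) \<le> y ^ Suc k - x ^ Suc k"
    using assms power_diff_sumr2[of y "Suc k" x] by (simp add: mult_left_mono)
  then have "(y - x) * (real (Suc k) * x ^ k) / fact (Suc k) \<le> (y ^ Suc k - x ^ Suc k) / fact (Suc k)"
    by (intro divide_right_mono) auto
  moreover have "(y - x) * (real (Suc k) * x ^ k) / fact (Suc k) = x ^ k / fact k * (y - x)"
    by (simp add: field_simps del: of_nat_Suc)
  ultimately show ?thesis by (simp add: mult.commute)
qed

context bv_path
begin

text \<open>If \<open>|f| \<le> \<Lambda>\<^sup>k/k!\<close> with \<open>\<Lambda> = basis_variation\<close>, a Riemann--Stieltjes sum of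
  \<open>\<integral> f d\<gamma>\<^sup>e\<close> is at most \<open>\<Sum>\<^sub>j \<Lambda>(t\<^sub>j)\<^sup>k/k! (\<Lambda>(t\<^sub>j\<^sub>+\<^sub>1) - \<Lambda>(t\<^sub>j))\<close>,
  which is dominated by a telescoping sum of increments of \<open>\<Lambda>\<^sup>k\<^sup>+\<^sup>1/(k+1)!\<close>.\<close>

lemma abs_RS_sum_le_power_div_fact:
  assumes e: "e \<in> Basis" and t: "t \<in> {a..b}" and p: "is_partition a t n r"
    and IH: "\<And>x. x \<in> {a..t} \<Longrightarrow> \<bar>f x\<bar> \<le> basis_variation x ^ k / fact k"
  shows "\<bar>RS_sum f (\<lambda>u. \<gamma> u \<bullet> e) n r r\<bar> \<le> basis_variation t ^ Suc k / fact (Suc k)"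
proof -
  let ?\<Lambda> = basis_variation
  have r: "a \<le> r j" "r j \<le> r (Suc j)" "r (Suc j) \<le> t" if "j < n" for j
    using is_partition_bounds[OF p, of j] is_partition_bounds[OF p, of "Suc j"] p that
    by (auto simp: is_partition_def)
  have "\<bar>RS_sum f (\<lambda>u. \<gamma> u \<bullet> e) n r r\<bar> \<le> (\<Sum>j<n. \<bar>f (r j)\<bar> * \<bar>\<gamma> (r (Suc j)) \<bullet> e - \<gamma> (r j) \<bullet> e\<bar>)"
    unfolding RS_sum_def by (rule order_trans[OF sum_abs]) (simp add: abs_mult)
  also have "\<dots> \<le> (\<Sum>j<n. ?\<Lambda> (r j) ^ k / fact k * (?\<Lambda> (r (Suc j)) - ?\<Lambda> (r j)))"
    using r t basis_variation_nonneg
    by (intro sum_mono mult_mono IH abs_coordinate_diff_le_basis_variation[OF e]) force+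
  also have "\<dots> \<le> (\<Sum>j<n. (?\<Lambda> (r (Suc j)) ^ Suc k - ?\<Lambda> (r j) ^ Suc k) / fact (Suc k))"
    using r t by (intro sum_mono power_div_fact_mult_diff_le basis_variation_nonneg basis_variation_mono) force+
  also have "\<dots> = ?\<Lambda> t ^ Suc k / fact (Suc k)"
    using p sum_lessThan_telescope[of "\<lambda>j. ?\<Lambda> (r j) ^ Suc k" n]
    by (simp add: is_partition_def basis_variation_start flip: sum_divide_distrib)
  finally show ?thesis .
qed

lemma abs_sig_rev_le:
  "set w \<subseteq> Basis \<Longrightarrow> t \<in> {a..b} \<Longrightarrow> \<bar>S w t\<bar> \<le> basis_variation t ^ length w / fact (length w)"
proof (induction w arbitrary: t)
  case (Cons e w)
  have "\<bar>S (e # w) t\<bar> \<le> basis_variation t ^ Suc (length w) / fact (Suc (length w))"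
  proof (rule has_RS_integral_abs_le[OF has_RS_integral_sig_rev])
    fix n r assume "is_partition a t n r"
    then show "\<bar>RS_sum (S w) (\<lambda>u. \<gamma> u \<bullet> e) n r r\<bar> \<le> basis_variation t ^ Suc (length w) / fact (Suc (length w))"
      using Cons by (intro abs_RS_sum_le_power_div_fact) auto
  qed (use Cons.prems in auto)
  then show ?case by simp
qed simp

lemma abs_signature_le: "\<bar>signature \<gamma> a b w\<bar> \<le> basis_variation b ^ length w / fact (length w)"
  using abs_sig_rev_le[of "rev w" b] basis_variation_nonneg[of b] le by (simp add: signature_def)

end

section \<open>Linear independence of shuffle characters\<close>

lemma shuffle_relation_twist:
  fixes \<psi> :: "nat \<Rightarrow> 'a list \<Rightarrow> real"
  assumes shuffle: "\<And>i u v. i < n \<Longrightarrow> set u \<subseteq> A \<Longrightarrow> set v \<subseteq> A \<Longrightarrow> \<psi> i u * \<psi> i v = (\<Sum>z\<leftarrow>shuffle_words u v. \<psi> i z)"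
    and zero: "\<And>w. set w \<subseteq> A \<Longrightarrow> (\<Sum>i<n. c i * \<psi> i w) = 0"
    and uv: "set u \<subseteq> A" "set v \<subseteq> A"
  shows "(\<Sum>i<n. c i * (\<psi> i u - x) * \<psi> i v) = 0"
proof -
  have "(\<Sum>i<n. c i * (\<psi> i u - x) * \<psi> i v) = (\<Sum>i<n. c i * (\<psi> i u * \<psi> i v)) - x * (\<Sum>i<n. c i * \<psi> i v)"
    by (simp add: algebra_simps sum_subtractf sum_distrib_left)
  also have "(\<Sum>i<n. c i * (\<psi> i u * \<psi> i v)) = (\<Sum>z\<leftarrow>shuffle_words u v. \<Sum>i<n. c i * \<psi> i z)"
    using shuffle[OF _ uv] by (simp add: sum_list_sum_nth sum_distrib_left sum.swap[of _ "{..<n}"])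
  also have "\<dots> = 0"
  proof -
    have "set z \<subseteq> A" if "z \<in> set (shuffle_words u v)" for z
      using set_shuffle_words[OF that] uv by blast
    then show ?thesis using zero by (simp cong: map_cong)
  qed
  finally show ?thesis using zero[OF uv(2)] by simp
qed

text \<open>Dedekind's argument for the linear independence of characters, with the shuffle product in
  place of multiplicativity.\<close>

lemma shuffle_characters_linear_independent:
  fixes \<psi> :: "nat \<Rightarrow> 'a list \<Rightarrow> real"
  assumes shuffle: "\<And>i u v. i < n \<Longrightarrow> set u \<subseteq> A \<Longrightarrow> set v \<subseteq> A \<Longrightarrow> \<psi> i u * \<psi> i v = (\<Sum>z\<leftarrow>shuffle_words u v. \<psi> i z)"
    and unit: "\<And>i. i < n \<Longrightarrow> \<psi> i [] = 1"
    and distinct: "\<And>i j. i < n \<Longrightarrow> j < n \<Longrightarrow> i \<noteq> j \<Longrightarrow> \<exists>u. set u \<subseteq> A \<and> \<psi> i u \<noteq> \<psi> j u"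
    and zero: "\<And>w. set w \<subseteq> A \<Longrightarrow> (\<Sum>i<n. c i * \<psi> i w) = 0"
  shows "\<forall>i<n. c i = 0"
  using assms
proof (induction n arbitrary: c)
  case (Suc n)
  have "c i = 0" if i: "i < n" for i
  proof -
    obtain u where u: "set u \<subseteq> A" "\<psi> i u \<noteq> \<psi> n u" using Suc.prems(3)[of i n] i by auto
    define c' where "c' j = c j * (\<psi> j u - \<psi> n u)" for j
    have "(\<Sum>j<n. c' j * \<psi> j v) = 0" if v: "set v \<subseteq> A" for v
      using shuffle_relation_twist[where x = "\<psi> n u", OF Suc.prems(1) Suc.prems(4) u(1) v]
      by (simp add: c'_def)
    then have "\<forall>j<n. c' j = 0" using Suc.prems by (intro Suc.IH) auto
    then have "c' i = 0" using i by blast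
    then show "c i = 0" using u(2) by (simp add: c'_def)
  qed
  then have "(\<Sum>i<Suc n. c i * \<psi> i []) = c n" using Suc.prems(2) by simp
  then have "c n = 0" using Suc.prems(4)[of "[]"] by simp
  with \<open>\<And>i. i < n \<Longrightarrow> c i = 0\<close> show ?case using less_Suc_eq by auto
qed simp

section \<open>The signature kernel\<close>

lemma finite_words: "finite {w. length w = k \<and> set w \<subseteq> A}" if "finite A"
  using finite_lists_length_eq[OF that, of k] by (simp add: conj_commute)

lemma card_basis_words: "card {w. length w = k \<and> set w \<subseteq> (Basis :: 'v::euclidean_space set)} = DIM('v) ^ k"
  using card_lists_length_eq[of "Basis :: 'v set" k] by (simp add: conj_commute)

lemma abs_HS_inner_le:
  fixes x y :: "'v::euclidean_space list \<Rightarrow> real"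
  assumes "\<And>w. \<bar>x w\<bar> \<le> A ^ length w / fact (length w)" "\<And>w. \<bar>y w\<bar> \<le> B ^ length w / fact (length w)"
    and "0 \<le> A"
  shows "\<bar>HS_inner k x y\<bar> \<le> (real DIM('v) * A * B) ^ k / (fact k)\<^sup>2"
proof -
  let ?W = "{w. length w = k \<and> set w \<subseteq> (Basis :: 'v set)}"
  have "\<bar>HS_inner k x y\<bar> \<le> (\<Sum>w\<in>?W. \<bar>x w\<bar> * \<bar>y w\<bar>)"
    unfolding HS_inner_def by (rule order_trans[OF sum_abs]) (simp add: abs_mult)
  also have "\<dots> \<le> (\<Sum>w\<in>?W. (A ^ k / fact k) * (B ^ k / fact k))"
    using assms by (intro sum_mono mult_mono) auto
  also have "\<dots> = real (DIM('v) ^ k) * (A ^ k / fact k) * (B ^ k / fact k)"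
    by (simp add: card_basis_words)
  also have "\<dots> = (real DIM('v) * A * B) ^ k / (fact k)\<^sup>2"
    by (simp add: power_mult_distrib power2_eq_square)
  finally show ?thesis .
qed

lemma summable_phi_HS_inner:
  fixes x y :: "'v::euclidean_space list \<Rightarrow> real"
  assumes \<phi>: "\<And>k. \<phi> k > 0" "\<And>C::real. C > 0 \<Longrightarrow> summable (\<lambda>k. C ^ k * \<phi> k / (fact k)\<^sup>2)"
    and "\<And>w. \<bar>x w\<bar> \<le> A ^ length w / fact (length w)" "\<And>w. \<bar>y w\<bar> \<le> B ^ length w / fact (length w)"
    and "0 \<le> A" "0 \<le> B"
  shows "summable (\<lambda>k. \<phi> k * HS_inner k x y)"
proof (rule summable_comparison_test'[OF \<phi>(2)])
  define D where "D = real DIM('v) * A * B"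
  show "D + 1 > 0" using assms(5,6) by (simp add: D_def add_nonneg_pos)
  fix k :: nat
  have "norm (\<phi> k * HS_inner k x y) = \<phi> k * \<bar>HS_inner k x y\<bar>"
    using \<phi>(1)[of k] by (simp add: abs_mult)
  also have "\<dots> \<le> \<phi> k * (D ^ k / (fact k)\<^sup>2)"
    using \<phi>(1)[of k] abs_HS_inner_le[OF assms(3-5), of k] unfolding D_def by (intro mult_left_mono) auto
  also have "\<dots> \<le> \<phi> k * ((D + 1) ^ k / (fact k)\<^sup>2)"
    using \<phi>(1)[of k] assms(5,6) by (intro mult_left_mono divide_right_mono power_mono) (auto simp: D_def)
  finally show "norm (\<phi> k * HS_inner k x y) \<le> (D + 1) ^ k * \<phi> k / (fact k)\<^sup>2" by (simp add: ac_simps)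
qed

lemma quadratic_form_HS_inner:
  "(\<Sum>i<n. \<Sum>j<n. c i * c j * HS_inner k (x i) (x j)) =
    (\<Sum>w\<in>{w. length w = k \<and> set w \<subseteq> (Basis :: 'v::euclidean_space set)}. (\<Sum>i<n. c i * x i w)\<^sup>2)"
proof -
  let ?W = "{w. length w = k \<and> set w \<subseteq> (Basis :: 'v set)}"
  have "(\<Sum>w\<in>?W. (\<Sum>i<n. c i * x i w)\<^sup>2) = (\<Sum>w\<in>?W. \<Sum>i<n. \<Sum>j<n. c i * c j * (x i w * x j w))"
    by (simp add: power2_eq_square sum_product algebra_simps)
  also have "\<dots> = (\<Sum>i<n. \<Sum>w\<in>?W. \<Sum>j<n. c i * c j * (x i w * x j w))"
    by (rule sum.swap)
  also have "\<dots> = (\<Sum>i<n. \<Sum>j<n. \<Sum>w\<in>?W. c i * c j * (x i w * x j w))"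
    by (intro sum.cong refl sum.swap)
  also have "\<dots> = (\<Sum>i<n. \<Sum>j<n. c i * c j * HS_inner k (x i) (x j))"
    by (simp add: HS_inner_def sum_distrib_left)
  finally show ?thesis by simp
qed

lemma quadratic_form_phi_inner:
  assumes "\<And>i j. i < n \<Longrightarrow> j < n \<Longrightarrow> summable (\<lambda>k. \<phi> k * HS_inner k (x i) (x j))"
  shows "(\<lambda>k. \<phi> k * (\<Sum>i<n. \<Sum>j<n. c i * c j * HS_inner k (x i) (x j))) sums
      (\<Sum>i<n. \<Sum>j<n. c i * c j * phi_inner \<phi> (x i) (x j))"
proof -
  have "(\<lambda>k. c i * c j * (\<phi> k * HS_inner k (x i) (x j))) sums (c i * c j * phi_inner \<phi> (x i) (x j))"
    if "i < n" "j < n" for i j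
    unfolding phi_inner_def using assms[OF that] by (intro sums_mult summable_sums)
  then have "(\<lambda>k. \<Sum>i<n. \<Sum>j<n. c i * c j * (\<phi> k * HS_inner k (x i) (x j))) sums
      (\<Sum>i<n. \<Sum>j<n. c i * c j * phi_inner \<phi> (x i) (x j))"
    by (intro sums_sum) auto
  then show ?thesis by (simp add: sum_distrib_left ac_simps)
qed

lemma signatures_linear_independent:
  fixes \<gamma> :: "nat \<Rightarrow> real \<Rightarrow> 'v::euclidean_space"
  assumes paths: "\<And>i. i < n \<Longrightarrow> bv_path (\<gamma> i) a b"
    and distinct: "\<And>i j. i < n \<Longrightarrow> j < n \<Longrightarrow> i \<noteq> j \<Longrightarrow> signature (\<gamma> i) a b \<noteq> signature (\<gamma> j) a b"
    and zero: "\<And>w. set w \<subseteq> Basis \<Longrightarrow> (\<Sum>i<n. c i * signature (\<gamma> i) a b w) = 0"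
  shows "\<forall>i<n. c i = 0"
proof (rule shuffle_characters_linear_independent[where \<psi> = "\<lambda>i u. sig_rev (\<gamma> i) a u b" and A = Basis])
  fix i u v assume "i < n"
  then show "sig_rev (\<gamma> i) a u b * sig_rev (\<gamma> i) a v b = (\<Sum>z\<leftarrow>shuffle_words u v. sig_rev (\<gamma> i) a z b)"
    using bv_path.sig_rev_shuffle[OF paths] bv_path.le[OF paths] by simp
next
  fix i j assume "i < n" "j < n" "i \<noteq> j"
  then obtain w where "signature (\<gamma> i) a b w \<noteq> signature (\<gamma> j) a b w" using distinct by blast
  then show "\<exists>u. set u \<subseteq> Basis \<and> sig_rev (\<gamma> i) a u b \<noteq> sig_rev (\<gamma> j) a u b"
    by (intro exI[of _ "rev w"]) (auto simp: signature_def split: if_splits)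
next
  fix u :: "'v list" assume "set u \<subseteq> Basis"
  then show "(\<Sum>i<n. c i * sig_rev (\<gamma> i) a u b) = 0" using zero[of "rev u"] by (simp add: signature_def)
qed simp

lemma summable_phi_HS_inner_signature:
  assumes "bv_path \<gamma> a b" "bv_path \<gamma>' a b"
    and "\<And>k. \<phi> k > 0" "\<And>C::real. C > 0 \<Longrightarrow> summable (\<lambda>k. C ^ k * \<phi> k / (fact k)\<^sup>2)"
  shows "summable (\<lambda>k. \<phi> k * HS_inner k (signature \<gamma> a b) (signature \<gamma>' a b))"
proof -
  interpret p: bv_path \<gamma> a b by fact
  interpret q: bv_path \<gamma>' a b by fact
  show ?thesis
  proof (rule summable_phi_HS_inner[where A = "p.basis_variation b" and B = "q.basis_variation b"])
    show "0 \<le> p.basis_variation b" "0 \<le> q.basis_variation b"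
      using p.le by (simp_all add: p.basis_variation_nonneg q.basis_variation_nonneg)
  qed (fact assms(3,4) p.abs_signature_le q.abs_signature_le)+
qed

lemma phi_inner_quadratic_form_pos:
  fixes x :: "nat \<Rightarrow> 'v::euclidean_space list \<Rightarrow> real"
  assumes \<phi>: "\<And>k. \<phi> k > 0"
    and summable: "\<And>i j. i < n \<Longrightarrow> j < n \<Longrightarrow> summable (\<lambda>k. \<phi> k * HS_inner k (x i) (x j))"
    and w: "set w \<subseteq> Basis" "(\<Sum>i<n. c i * x i w) \<noteq> 0"
  shows "(\<Sum>i<n. \<Sum>j<n. c i * c j * phi_inner \<phi> (x i) (x j)) > 0"
proof -
  let ?T = "\<lambda>k. \<phi> k * (\<Sum>w\<in>{w. length w = k \<and> set w \<subseteq> (Basis :: 'v set)}. (\<Sum>i<n. c i * x i w)\<^sup>2)"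
  have sums: "?T sums (\<Sum>i<n. \<Sum>j<n. c i * c j * phi_inner \<phi> (x i) (x j))"
    using quadratic_form_phi_inner[OF summable] by (simp add: quadratic_form_HS_inner)
  moreover have "0 \<le> ?T k" for k using \<phi>[of k] by (simp add: sum_nonneg)
  moreover have "0 < ?T (length w)"
  proof (intro mult_pos_pos sum_pos2[where i = w] finite_words)
    show "0 < (\<Sum>i<n. c i * x i w)\<^sup>2" using w(2) by simp
  qed (use \<phi> w in simp_all)
  ultimately have "0 < suminf ?T" by (intro suminf_pos2[where i = "length w"] sums_summable)
  then show ?thesis using sums_unique[OF sums] by simp
qed

theorem mainTheorem17:
  fixes \<gamma> :: "nat \<Rightarrow> real \<Rightarrow> 'v::euclidean_space"
    and a b :: real and n :: nat and \<phi> :: "nat \<Rightarrow> real"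
  assumes "a \<le> b"
    and "\<And>i. i < n \<Longrightarrow> continuous_on {a..b} (\<gamma> i)"
    and "\<And>i. i < n \<Longrightarrow> bounded_variation_on (\<gamma> i) a b"
    and "\<And>i j. i < n \<Longrightarrow> j < n \<Longrightarrow> i \<noteq> j \<Longrightarrow> signature (\<gamma> i) a b \<noteq> signature (\<gamma> j) a b"
    and "\<And>k. \<phi> k > 0"
    and "\<And>C::real. C > 0 \<Longrightarrow> summable (\<lambda>k. C ^ k * \<phi> k / (fact k)\<^sup>2)"
  shows "(\<forall>i<n. \<forall>j<n. summable (\<lambda>k. \<phi> k * HS_inner k (signature (\<gamma> i) a b) (signature (\<gamma> j) a b)))
    \<and> (\<forall>c :: nat \<Rightarrow> real. (\<exists>i<n. c i \<noteq> 0) \<longrightarrow>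
         (\<Sum>i<n. \<Sum>j<n. c i * c j * phi_inner \<phi> (signature (\<gamma> i) a b) (signature (\<gamma> j) a b)) > 0)"
proof -
  have paths: "bv_path (\<gamma> i) a b" if "i < n" for i using assms(1-3) that by (simp add: bv_path_def)
  have summable: "summable (\<lambda>k. \<phi> k * HS_inner k (signature (\<gamma> i) a b) (signature (\<gamma> j) a b))"
    if "i < n" "j < n" for i j
    using paths[OF that(1)] paths[OF that(2)] assms(5,6) by (rule summable_phi_HS_inner_signature)
  have "(\<Sum>i<n. \<Sum>j<n. c i * c j * phi_inner \<phi> (signature (\<gamma> i) a b) (signature (\<gamma> j) a b)) > 0"
    if c: "\<exists>i<n. c i \<noteq> 0" for c
  proof -
    have "\<exists>w. set w \<subseteq> Basis \<and> (\<Sum>i<n. c i * signature (\<gamma> i) a b w) \<noteq> 0"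
    proof (rule ccontr)
      assume "\<nexists>w. set w \<subseteq> Basis \<and> (\<Sum>i<n. c i * signature (\<gamma> i) a b w) \<noteq> 0"
      then have "\<forall>i<n. c i = 0" by (intro signatures_linear_independent[OF paths assms(4)]) auto
      with c show False by blast
    qed
    then obtain w where w: "set w \<subseteq> Basis" "(\<Sum>i<n. c i * signature (\<gamma> i) a b w) \<noteq> 0" by blast
    show ?thesis
      by (rule phi_inner_quadratic_form_pos[where x = "\<lambda>i. signature (\<gamma> i) a b", OF assms(5) _ w])
        (rule summable)
  qed
  with summable show ?thesis by blast
qed

end
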